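(* Let $G$ be a finite group of order $mn$, let $H$ be a normal subgroup of $G$ of order $n$, and suppose there exists an $(m,n,m-1,\frac{m-2}{n})$-relative difference set $R$ in $G$ relative to $H$. Then there exists a family of subsets of $G$ which partitions $G\setminus H$ and which is both an $(mn,n,m-1,m-2,0)$-DPDF and an $(mn,n,m-1,(m-2)(n-1),(m-1)n)$-EPDF in $G$.
   Context: Groups are written multiplicatively with identity $e$; $G^*=G\setminus\{e\}$. For $D\subseteq G$, $\Delta(D)$ is the multiset $\{xy^{-1}: x,y\in D, x\ne y\}$; for $D_1,D_2\subseteq G$, $\Delta(D_1,D_2)$ is the multiset $\{xy^{-1}:x\in D_1,y\in D_2\}$. For a family $A=\{A_1,\dots,A_s\}$ of pairwise disjoint subsets, ${\rm Int}(A)=\bigcup_i\Delta(A_i)$ and ${\rm Ext}(A)=\bigcup_{i\ne j}\Delta(A_i,A_j)$ (multiset unions). For $|G|=v$, a $(v,s,k,\lambda,\mu)$-DPDF is a family of $s$ pairwise disjoint $k$-subsets of $G^*$ with union $S$ such that ${\rm Int}(A)$ contains each element of $S$ exactly $\lambda$ times and each element of $G\setminus(S\cup\{e\})$ exactly $\mu$ times; a $(v,s,k,\lambda,\mu)$-EPDF is defined the same way using ${\rm Ext}(A)$. If $G$ has order $mn$ and $H$ is a normal subgroup of order $n$, a $k$-subset $R\subseteq G$ is an $(m,n,k,\lambda)$-relative difference set (RDS) relative to $H$ if $\Delta(R)$ contains each element of $G\setminus H$ exactly $\lambda$ times and no element of $H\setminus\{e\}$. A family partitions a set $X$ if its members are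 pairwise disjoint with union $X$. *)

theory Defs
  imports Complex_Main "HOL-Algebra.Coset" "HOL-Library.Multiset"
begin

definition Delta :: "('a, 'b) monoid_scheme \<Rightarrow> 'a set \<Rightarrow> 'a multiset" where
  "Delta G D = image_mset (\<lambda>(x, y). x \<otimes>\<^bsub>G\<^esub> inv\<^bsub>G\<^esub> y)
      (mset_set {(x, y). x \<in> D \<and> y \<in> D \<and> x \<noteq> y})"

definition Delta2 :: "('a, 'b) monoid_scheme \<Rightarrow> 'a set \<Rightarrow> 'a set \<Rightarrow> 'a multiset" where
  "Delta2 G D1 D2 = image_mset (\<lambda>(x, y). x \<otimes>\<^bsub>G\<^esub> inv\<^bsub>G\<^esub> y) (mset_set (D1 \<times> D2))"

text \<open>A family of s sets is given as an indexed family A 0, ..., A (s-1).\<close>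
definition IntD :: "('a, 'b) monoid_scheme \<Rightarrow> nat \<Rightarrow> (nat \<Rightarrow> 'a set) \<Rightarrow> 'a multiset" where
  "IntD G s A = (\<Sum>i<s. Delta G (A i))"

definition ExtD :: "('a, 'b) monoid_scheme \<Rightarrow> nat \<Rightarrow> (nat \<Rightarrow> 'a set) \<Rightarrow> 'a multiset" where
  "ExtD G s A = (\<Sum>i<s. \<Sum>j\<in>{..<s} - {i}. Delta2 G (A i) (A j))"

definition pairwise_disjoint_fam :: "nat \<Rightarrow> (nat \<Rightarrow> 'a set) \<Rightarrow> bool" where
  "pairwise_disjoint_fam s A \<longleftrightarrow> (\<forall>i<s. \<forall>j<s. i \<noteq> j \<longrightarrow> A i \<inter> A j = {})"

definition partitions_fam :: "nat \<Rightarrow> (nat \<Rightarrow> 'a set) \<Rightarrow> 'a set \<Rightarrow> bool" where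
  "partitions_fam s A X \<longleftrightarrow> pairwise_disjoint_fam s A \<and> (\<Union>i<s. A i) = X"

definition PDF_gen :: "('a, 'b) monoid_scheme \<Rightarrow> (nat \<Rightarrow> (nat \<Rightarrow> 'a set) \<Rightarrow> 'a multiset)
    \<Rightarrow> nat \<Rightarrow> nat \<Rightarrow> nat \<Rightarrow> nat \<Rightarrow> nat \<Rightarrow> (nat \<Rightarrow> 'a set) \<Rightarrow> bool" where
  "PDF_gen G Op v s k lam mu A \<longleftrightarrow>
     card (carrier G) = v \<and>
     (\<forall>i<s. A i \<subseteq> carrier G - {\<one>\<^bsub>G\<^esub>} \<and> card (A i) = k) \<and>
     pairwise_disjoint_fam s A \<and>
     (\<forall>x\<in>(\<Union>i<s. A i). count (Op s A) x = lam) \<and>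
     (\<forall>x\<in>carrier G - (\<Union>i<s. A i) - {\<one>\<^bsub>G\<^esub>}. count (Op s A) x = mu)"

definition DPDF :: "('a, 'b) monoid_scheme \<Rightarrow> nat \<Rightarrow> nat \<Rightarrow> nat \<Rightarrow> nat \<Rightarrow> nat \<Rightarrow> (nat \<Rightarrow> 'a set) \<Rightarrow> bool" where
  "DPDF G v s k lam mu A \<longleftrightarrow> PDF_gen G (IntD G) v s k lam mu A"

definition EPDF :: "('a, 'b) monoid_scheme \<Rightarrow> nat \<Rightarrow> nat \<Rightarrow> nat \<Rightarrow> nat \<Rightarrow> nat \<Rightarrow> (nat \<Rightarrow> 'a set) \<Rightarrow> bool" where
  "EPDF G v s k lam mu A \<longleftrightarrow> PDF_gen G (ExtD G) v s k lam mu A"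

definition RDS :: "('a, 'b) monoid_scheme \<Rightarrow> 'a set \<Rightarrow> nat \<Rightarrow> nat \<Rightarrow> nat \<Rightarrow> nat \<Rightarrow> 'a set \<Rightarrow> bool" where
  "RDS G H m n k lam R \<longleftrightarrow>
     card (carrier G) = m * n \<and> H \<lhd> G \<and> card H = n \<and>
     R \<subseteq> carrier G \<and> card R = k \<and>
     (\<forall>x\<in>carrier G - H. count (Delta G R) x = lam) \<and>
     (\<forall>x\<in>H - {\<one>\<^bsub>G\<^esub>}. count (Delta G R) x = 0)"

end

theory Submission
  imports Defs "HOL-Combinatorics.Permutations"
begin

text \<open>Since \<open>\<Delta>(R)\<close> avoids \<open>H - {e}\<close>, the set \<open>R\<close> meets every coset of \<open>H\<close> at most once;
  as \<open>|R| = m - 1 < m\<close>, some right translate \<open>R' = R c\<close> misses \<open>H\<close> altogether, and \<open>R'\<close> is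
  again a relative difference set. By normality of \<open>H\<close> the \<open>n\<close> translates \<open>R' h\<close>, \<open>h \<in> H\<close>, are
  pairwise disjoint, so by counting they partition \<open>G - H\<close>. Translation does not change
  differences, so \<open>Int(A) = n \<Delta>(R')\<close>, which gives the DPDF parameters. Off the identity,
  \<open>Int(A) + Ext(A) = \<Delta>(G - H, G - H)\<close>, and \<open>g\<close> has \<open>|G| - |H|\<close> or \<open>|G| - 2|H|\<close>
  representations \<open>g = x y\<^sup>-\<^sup>1\<close> with \<open>x, y \<notin> H\<close> according as \<open>g \<in> H\<close> or not; subtracting
  \<open>Int(A)\<close> gives the EPDF parameters.\<close>

lemma mset_set_UN_disjoint:
  assumes "finite I" "\<And>i. i \<in> I \<Longrightarrow> finite (A i)" "disjoint_family_on A I"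
  shows "mset_set (\<Union>i\<in>I. A i) = (\<Sum>i\<in>I. mset_set (A i))"
  using sum.UNION_disjoint_family[of I A "\<lambda>x. {#x#}"] assms
  by (simp add: sum_multiset_singleton)

lemma image_mset_sum: "image_mset f (\<Sum>i\<in>I. M i) = (\<Sum>i\<in>I. image_mset f (M i))"
  by (induction I rule: infinite_finite_induct) auto

lemma disjoint_family_on_lessThan_iff:
  "disjoint_family_on A {..<s} \<longleftrightarrow> pairwise_disjoint_fam s A"
  by (auto simp: disjoint_family_on_def pairwise_disjoint_fam_def)

lemma count_Delta:
  assumes "finite X"
  shows "count (Delta G X) g =
    card {p \<in> {(x, y). x \<in> X \<and> y \<in> X \<and> x \<noteq> y}. fst p \<otimes>\<^bsub>G\<^esub> inv\<^bsub>G\<^esub> snd p = g}"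
proof -
  have "finite {(x, y). x \<in> X \<and> y \<in> X \<and> x \<noteq> y}"
    by (rule finite_subset[of _ "X \<times> X"]) (use assms in auto)
  then show ?thesis
    by (simp add: Delta_def count_image_mset_eq_card_vimage case_prod_beta)
qed

lemma count_Delta2:
  assumes "finite X" "finite Y"
  shows "count (Delta2 G X Y) g = card {p \<in> X \<times> Y. fst p \<otimes>\<^bsub>G\<^esub> inv\<^bsub>G\<^esub> snd p = g}"
  using assms by (simp add: Delta2_def count_image_mset_eq_card_vimage case_prod_beta)

lemma Delta2_UN_UN:
  assumes "finite I" "finite J" "\<And>i. i \<in> I \<Longrightarrow> finite (A i)" "\<And>j. j \<in> J \<Longrightarrow> finite (B j)"
    and "disjoint_family_on A I" "disjoint_family_on B J"
  shows "Delta2 G (\<Union>i\<in>I. A i) (\<Union>j\<in>J. B j) = (\<Sum>i\<in>I. \<Sum>j\<in>J. Delta2 G (A i) (B j))"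
proof -
  have disj: "disjoint_family_on (\<lambda>(i, j). A i \<times> B j) (I \<times> J)"
    using assms(5,6) unfolding disjoint_family_on_def by fastforce
  have "(\<Union>i\<in>I. A i) \<times> (\<Union>j\<in>J. B j) = (\<Union>(i, j)\<in>I \<times> J. A i \<times> B j)"
    by auto
  also have "mset_set \<dots> = (\<Sum>(i, j)\<in>I \<times> J. mset_set (A i \<times> B j))"
    using assms(1-4) disj by (subst mset_set_UN_disjoint) (auto simp: prod.case_distrib)
  finally have "Delta2 G (\<Union>i\<in>I. A i) (\<Union>j\<in>J. B j) = (\<Sum>(i, j)\<in>I \<times> J. Delta2 G (A i) (B j))"
    by (simp add: Delta2_def image_mset_sum prod.case_distrib)
  then show ?thesis
    by (simp add: sum.cartesian_product)
qed

lemma Delta2_Union_eq_diagonal_plus_ExtD: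
  assumes "pairwise_disjoint_fam s A" "\<And>i. i < s \<Longrightarrow> finite (A i)"
  shows "Delta2 G (\<Union>i<s. A i) (\<Union>i<s. A i) = (\<Sum>i<s. Delta2 G (A i) (A i)) + ExtD G s A"
proof -
  have "Delta2 G (\<Union>i<s. A i) (\<Union>i<s. A i) = (\<Sum>i<s. \<Sum>j<s. Delta2 G (A i) (A j))"
    using assms Delta2_UN_UN[of "{..<s}" "{..<s}" A A] by (simp add: disjoint_family_on_lessThan_iff)
  also have "\<dots> = (\<Sum>i<s. Delta2 G (A i) (A i) + (\<Sum>j\<in>{..<s} - {i}. Delta2 G (A i) (A j)))"
    by (rule sum.cong) (auto simp: sum.remove)
  also have "\<dots> = (\<Sum>i<s. Delta2 G (A i) (A i)) + ExtD G s A"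
    unfolding ExtD_def by (simp add: sum.distrib)
  finally show ?thesis .
qed

lemma PDF_gen_partition_complement:
  assumes "subgroup H G" "partitions_fam s A (carrier G - H)" "card (carrier G) = v"
    and "\<And>i. i < s \<Longrightarrow> card (A i) = k"
    and "\<And>x. x \<in> carrier G - H \<Longrightarrow> count (Op s A) x = lam"
    and "\<And>x. x \<in> H - {\<one>\<^bsub>G\<^esub>} \<Longrightarrow> count (Op s A) x = mu"
  shows "PDF_gen G Op v s k lam mu A"
proof -
  have "\<one>\<^bsub>G\<^esub> \<in> H" "H \<subseteq> carrier G"
    using assms(1) subgroup.one_closed subgroup.subset by blast+
  moreover have disj: "pairwise_disjoint_fam s A" and U: "(\<Union>i<s. A i) = carrier G - H"
    using assms(2) unfolding partitions_fam_def by auto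
  ultimately have "\<forall>i<s. A i \<subseteq> carrier G - {\<one>\<^bsub>G\<^esub>}"
    and "carrier G - (\<Union>i<s. A i) - {\<one>\<^bsub>G\<^esub>} = H - {\<one>\<^bsub>G\<^esub>}"
    by blast+
  then show ?thesis
    unfolding PDF_gen_def using disj U assms(3-6) by simp
qed

context group begin

lemma count_Delta_eq_count_Delta2:
  assumes "finite X" "X \<subseteq> carrier G" "g \<noteq> \<one>"
  shows "count (Delta G X) g = count (Delta2 G X X) g"
proof -
  have "{p \<in> {(x, y). x \<in> X \<and> y \<in> X \<and> x \<noteq> y}. fst p \<otimes> inv snd p = g}
      = {p \<in> X \<times> X. fst p \<otimes> inv snd p = g}"
    using assms by (auto simp: subsetD)
  then show ?thesis
    using assms by (simp add: count_Delta count_Delta2)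
qed

lemma count_IntD_plus_ExtD:
  assumes "partitions_fam s A X" "finite X" "X \<subseteq> carrier G" "g \<noteq> \<one>"
  shows "count (IntD G s A) g + count (ExtD G s A) g = count (Delta2 G X X) g"
proof -
  have disj: "pairwise_disjoint_fam s A" and X: "(\<Union>i<s. A i) = X"
    using assms(1) unfolding partitions_fam_def by auto
  have "A i \<subseteq> X" if "i < s" for i
    using that X by blast
  then have A: "finite (A i)" "A i \<subseteq> carrier G" if "i < s" for i
    using that assms(2,3) finite_subset by blast+
  have "count (Delta2 G X X) g = count (\<Sum>i<s. Delta2 G (A i) (A i)) g + count (ExtD G s A) g"
    using Delta2_Union_eq_diagonal_plus_ExtD[of s A G] disj X A by simp
  also have "count (\<Sum>i<s. Delta2 G (A i) (A i)) g = count (IntD G s A) g"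
    unfolding IntD_def count_sum using A assms(4) by (simp add: count_Delta_eq_count_Delta2)
  finally show ?thesis by simp
qed

lemma count_Delta2_self:
  assumes "finite U" "U \<subseteq> carrier G" "g \<in> carrier G"
  shows "count (Delta2 G U U) g = card {b \<in> U. g \<otimes> b \<in> U}"
proof -
  have "{p \<in> U \<times> U. fst p \<otimes> inv snd p = g} = (\<lambda>b. (g \<otimes> b, b)) ` {b \<in> U. g \<otimes> b \<in> U}"
  proof (intro equalityI subsetI)
    fix p assume "p \<in> {p \<in> U \<times> U. fst p \<otimes> inv snd p = g}"
    then obtain a b where "p = (a, b)" "a \<in> U" "b \<in> U" "a \<otimes> inv b = g" by auto
    moreover then have "a = g \<otimes> b" using assms by (auto simp: m_assoc subsetD)
    ultimately show "p \<in> (\<lambda>b. (g \<otimes> b, b)) ` {b \<in> U. g \<otimes> b \<in> U}" by auto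
  qed (use assms in \<open>auto simp: m_assoc subsetD\<close>)
  moreover have "inj_on (\<lambda>b. (g \<otimes> b, b)) {b \<in> U. g \<otimes> b \<in> U}"
    by (auto simp: inj_on_def)
  ultimately show ?thesis
    using assms by (simp add: count_Delta2 card_image)
qed

lemma card_left_translate_preimage:
  assumes "subgroup H G" "g \<in> carrier G"
  shows "card {b \<in> carrier G. g \<otimes> b \<in> H} = card H"
proof -
  interpret H: subgroup H G by fact
  have "{b \<in> carrier G. g \<otimes> b \<in> H} = (\<lambda>h. inv g \<otimes> h) ` H"
  proof (intro equalityI subsetI)
    fix b assume "b \<in> {b \<in> carrier G. g \<otimes> b \<in> H}"
    moreover then have "b = inv g \<otimes> (g \<otimes> b)"
      using assms(2) by (simp add: m_assoc [symmetric])
    ultimately show "b \<in> (\<lambda>h. inv g \<otimes> h) ` H" by blast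
  qed (use assms(2) H.subset in \<open>auto simp: m_assoc [symmetric]\<close>)
  moreover have "inj_on (\<lambda>h. inv g \<otimes> h) H"
    using assms(2) H.subset by (auto simp: inj_on_def)
  ultimately show ?thesis by (simp add: card_image)
qed

lemma card_left_translate_in_complement:
  assumes "subgroup H G" "finite (carrier G)" "g \<in> carrier G"
  shows "card {b \<in> carrier G - H. g \<otimes> b \<in> carrier G - H}
    = (if g \<in> H then order G - card H else order G - 2 * card H)"
proof -
  interpret H: subgroup H G by fact
  let ?L = "{b \<in> carrier G. g \<otimes> b \<in> H}"
  have finH: "finite H" using assms(2) H.subset finite_subset by blast
  have cardU: "card (carrier G - H) = order G - card H"
    using card_Diff_subset[OF finH H.subset] by (simp add: order_def)
  have "{b \<in> carrier G - H. g \<otimes> b \<in> carrier G - H} = (carrier G - H) - ?L"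
    using assms(3) by auto
  moreover have "?L = H" if "g \<in> H"
  proof (intro equalityI subsetI)
    fix b assume "b \<in> ?L"
    then have "inv g \<otimes> (g \<otimes> b) \<in> H" using that by (simp add: H.m_closed H.m_inv_closed)
    then show "b \<in> H" using \<open>b \<in> ?L\<close> assms(3) by (simp add: m_assoc [symmetric])
  qed (use that H.subset in \<open>auto simp: H.m_closed\<close>)
  moreover have "?L \<subseteq> carrier G - H" if "g \<notin> H"
  proof (intro subsetI DiffI)
    fix b assume b: "b \<in> ?L"
    then show "b \<in> carrier G" by simp
    show "b \<notin> H"
    proof
      assume "b \<in> H"
      then have "(g \<otimes> b) \<otimes> inv b \<in> H" using b by (simp add: H.m_closed H.m_inv_closed)
      then show False using b assms(3) that by (simp add: m_assoc)
    qed
  qed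
  ultimately show ?thesis
    using cardU card_left_translate_preimage[OF assms(1,3)] finH assms(2)
    by (auto simp: card_Diff_subset)
qed

lemma count_IntD_plus_ExtD_complement:
  assumes "subgroup H G" "finite (carrier G)" "partitions_fam s A (carrier G - H)"
    and "g \<in> carrier G" "g \<noteq> \<one>"
  shows "count (IntD G s A) g + count (ExtD G s A) g
    = (if g \<in> H then order G - card H else order G - 2 * card H)"
  using assms count_IntD_plus_ExtD[of s A "carrier G - H"] count_Delta2_self[of "carrier G - H"]
    card_left_translate_in_complement by auto

lemma DPDF_EPDF_partition_complement:
  assumes "subgroup H G" "finite (carrier G)" "partitions_fam s A (carrier G - H)"
    and "\<And>i. i < s \<Longrightarrow> card (A i) = k"
    and "\<And>x. x \<in> carrier G - H \<Longrightarrow> count (IntD G s A) x = lam"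
    and "\<And>x. x \<in> H - {\<one>} \<Longrightarrow> count (IntD G s A) x = 0"
  shows "DPDF G (order G) s k lam 0 A"
    and "EPDF G (order G) s k (order G - 2 * card H - lam) (order G - card H) A"
proof -
  interpret H: subgroup H G by fact
  show "DPDF G (order G) s k lam 0 A"
    unfolding DPDF_def order_def
    by (rule PDF_gen_partition_complement[where Op = "IntD G", OF assms(1,3) refl assms(4-6)])
  have Ext: "count (ExtD G s A) x
      = (if x \<in> H then order G - card H else order G - 2 * card H) - count (IntD G s A) x"
    if "x \<in> carrier G" "x \<noteq> \<one>" for x
    using count_IntD_plus_ExtD_complement[OF assms(1-3) that] by simp
  show "EPDF G (order G) s k (order G - 2 * card H - lam) (order G - card H) A"
    unfolding EPDF_def order_def
  proof (rule PDF_gen_partition_complement[where Op = "ExtD G", OF assms(1,3) refl assms(4)])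
    fix x assume "x \<in> carrier G - H"
    moreover then have "x \<noteq> \<one>" using H.one_closed by blast
    ultimately show "count (ExtD G s A) x = card (carrier G) - 2 * card H - lam"
      using Ext assms(5) by (simp add: order_def)
  next
    fix x assume "x \<in> H - {\<one>}"
    then show "count (ExtD G s A) x = card (carrier G) - card H"
      using Ext assms(6) H.subset by (auto simp: order_def)
  qed
qed

lemma r_coset_eq_image: "X #> c = (\<lambda>x. x \<otimes> c) ` X"
  by (auto simp: r_coset_def)

lemma card_r_coset:
  assumes "X \<subseteq> carrier G" "c \<in> carrier G"
  shows "card (X #> c) = card X"
  using card_rcosets_equal[OF rcosetsI] assms by simp

lemma Delta_r_coset:
  assumes "X \<subseteq> carrier G" "c \<in> carrier G"
  shows "Delta G (X #> c) = Delta G X"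
proof -
  let ?P = "\<lambda>X. {(x, y). x \<in> X \<and> y \<in> X \<and> x \<noteq> y}"
  let ?t = "\<lambda>(x, y). (x \<otimes> c, y \<otimes> c)"
  have inj: "inj_on ?t (?P X)" using assms by (auto simp: inj_on_def subsetD)
  have img: "?P (X #> c) = ?t ` ?P X"
    using assms by (auto simp: r_coset_eq_image subsetD)
  have cancel: "c \<otimes> (inv c \<otimes> z) = z" if "z \<in> carrier G" for z
    using that assms(2) by (simp add: m_assoc [symmetric])
  have quot: "((\<lambda>(x, y). x \<otimes> inv y) \<circ> ?t) p = (\<lambda>(x, y). x \<otimes> inv y) p" if "p \<in> ?P X" for p
    using that assms by (auto simp: inv_mult_group m_assoc cancel subsetD)
  have "Delta G (X #> c) = image_mset ((\<lambda>(x, y). x \<otimes> inv y) \<circ> ?t) (mset_set (?P X))"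
    unfolding Delta_def img image_mset_mset_set[OF inj, symmetric] by (simp add: multiset.map_comp)
  also have "\<dots> = Delta G X"
    unfolding Delta_def by (rule image_mset_cong) (use quot in \<open>cases "finite (?P X)"; auto\<close>)
  finally show ?thesis .
qed

lemma count_IntD_r_cosets:
  assumes "X \<subseteq> carrier G" "\<And>i. i < s \<Longrightarrow> c i \<in> carrier G"
  shows "count (IntD G s (\<lambda>i. X #> c i)) g = s * count (Delta G X) g"
  using assms by (simp add: IntD_def count_sum Delta_r_coset)

lemma RDS_r_coset:
  assumes "RDS G H m n k lam R" "c \<in> carrier G"
  shows "RDS G H m n k lam (R #> c)"
proof -
  have "R \<subseteq> carrier G" using assms(1) unfolding RDS_def by blast
  then show ?thesis
    using assms unfolding RDS_def by (simp add: r_coset_subset_G card_r_coset Delta_r_coset)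
qed

lemma RDS_eq_if_diff_in_subgroup:
  assumes "RDS G H m n k lam R" "finite R" "x \<in> R" "y \<in> R" "x \<otimes> inv y \<in> H"
  shows "x = y"
proof (rule ccontr)
  assume "x \<noteq> y"
  have "x \<in> carrier G" "y \<in> carrier G" using assms(1,3,4) unfolding RDS_def by auto
  then have "x = x \<otimes> inv y \<otimes> y" by (simp add: m_assoc)
  then have "x \<otimes> inv y \<noteq> \<one>" using \<open>x \<noteq> y\<close> \<open>y \<in> carrier G\<close> by auto
  then have "count (Delta G R) (x \<otimes> inv y) = 0"
    using assms(1,5) unfolding RDS_def by blast
  moreover have "(x, y) \<in> {p \<in> {(x, y). x \<in> R \<and> y \<in> R \<and> x \<noteq> y}. fst p \<otimes> inv snd p = x \<otimes> inv y}"
    using assms(3,4) \<open>x \<noteq> y\<close> by auto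
  moreover have "finite {(x, y). x \<in> R \<and> y \<in> R \<and> x \<noteq> y}"
    by (rule finite_subset[of _ "R \<times> R"]) (use assms(2) in auto)
  ultimately show False
    using count_Delta[OF assms(2), of G] card_0_eq by fastforce
qed

lemma obtain_r_coset_disjoint_subgroup:
  assumes "subgroup H G" "finite (carrier G)" "R \<subseteq> carrier G" "card R * card H < order G"
  obtains c where "c \<in> carrier G" "(R #> c) \<inter> H = {}"
proof -
  interpret H: subgroup H G by fact
  let ?T = "\<Union>x\<in>R. H #> x"
  have "card ?T \<le> (\<Sum>x\<in>R. card (H #> x))"
    using finite_subset[OF assms(3,2)] by (rule card_UN_le)
  also have "\<dots> = (\<Sum>x\<in>R. card H)"
    using assms(3) H.subset by (intro sum.cong) (auto simp: card_r_coset)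
  finally have "card ?T < card (carrier G)" using assms(4) by (simp add: order_def)
  moreover have "?T \<subseteq> carrier G" using assms(3) r_coset_subset_G[OF H.subset] by blast
  then have "finite ?T" using assms(2) by (rule finite_subset)
  ultimately have "\<not> carrier G \<subseteq> ?T" by (auto dest: card_mono)
  then obtain g where g: "g \<in> carrier G" "g \<notin> ?T" by blast
  have "x \<otimes> inv g \<notin> H" if "x \<in> R" for x
  proof
    assume "x \<otimes> inv g \<in> H"
    moreover have x: "x \<in> carrier G" using that assms(3) by blast
    ultimately have "g \<otimes> inv x \<in> H"
      using H.m_inv_closed g(1) by (metis inv_closed inv_inv inv_mult_group)
    then have "g \<in> H #> x" using H.rcos_module_rev[OF is_group x g(1)] by blast
    then show False using g(2) that by blast
  qed
  then have "(R #> inv g) \<inter> H = {}" by (auto simp: r_coset_eq_image)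
  then show thesis using that g(1) by blast
qed

lemma r_coset_disjoint_subgroup:
  assumes "subgroup H G" "R \<inter> H = {}" "R \<subseteq> carrier G" "h \<in> H"
  shows "(R #> h) \<inter> H = {}"
proof -
  interpret H: subgroup H G by fact
  have "x \<otimes> h \<notin> H" if "x \<in> R" for x
  proof
    assume "x \<otimes> h \<in> H"
    then have "x \<otimes> h \<otimes> inv h \<in> H" using assms(4) by (simp add: H.m_closed H.m_inv_closed)
    then have "x \<in> H" using that assms(3,4) H.subset by (simp add: m_assoc subsetD)
    then show False using that assms(2) by blast
  qed
  then show ?thesis by (auto simp: r_coset_eq_image)
qed

lemma r_cosets_disjoint_if_separated:
  assumes "H \<lhd> G" "R \<subseteq> carrier G"
    and sep: "\<And>x y. x \<in> R \<Longrightarrow> y \<in> R \<Longrightarrow> x \<otimes> inv y \<in> H \<Longrightarrow> x = y"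
    and "h \<in> H" "h' \<in> H" "h \<noteq> h'"
  shows "(R #> h) \<inter> (R #> h') = {}"
proof (rule ccontr)
  interpret normal H G by fact
  assume "(R #> h) \<inter> (R #> h') \<noteq> {}"
  then obtain x y where xy: "x \<in> R" "y \<in> R" "x \<otimes> h = y \<otimes> h'"
    by (auto simp: r_coset_eq_image)
  have carr: "x \<in> carrier G" "y \<in> carrier G" "h \<in> carrier G" "h' \<in> carrier G"
    using xy assms(2,4,5) subset by auto
  then have "x = x \<otimes> h \<otimes> inv h" by (simp add: m_assoc)
  also have "\<dots> = y \<otimes> (h' \<otimes> inv h)" using xy(3) carr by (simp add: m_assoc)
  finally have "x \<otimes> inv y = y \<otimes> (h' \<otimes> inv h) \<otimes> inv y" by simp
  also have "\<dots> \<in> H"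
    using carr assms(4,5) by (simp add: inv_op_closed2)
  finally have "x = y" using sep xy by blast
  then show False using xy(3) carr assms(6) by simp
qed

lemma partitions_complement_r_cosets:
  assumes "H \<lhd> G" "finite (carrier G)" "R \<subseteq> carrier G" "R \<inter> H = {}"
    and "\<And>x y. x \<in> R \<Longrightarrow> y \<in> R \<Longrightarrow> x \<otimes> inv y \<in> H \<Longrightarrow> x = y"
    and "bij_betw h {..<s} H" "card R * card H = order G - card H"
  shows "partitions_fam s (\<lambda>i. R #> h i) (carrier G - H)"
proof -
  interpret normal H G by fact
  have hH: "h i \<in> H" if "i < s" for i using assms(6) that bij_betwE by blast
  have sub: "R #> h i \<subseteq> carrier G - H" if "i < s" for i
    using r_coset_disjoint_subgroup[OF subgroup_axioms assms(4,3) hH[OF that]]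
      r_coset_subset_G[OF assms(3)] hH[OF that] subset by blast
  have disj: "pairwise_disjoint_fam s (\<lambda>i. R #> h i)"
    using r_cosets_disjoint_if_separated[OF assms(1,3,5)] hH assms(6)
    unfolding pairwise_disjoint_fam_def bij_betw_def inj_on_def by blast
  have "card (\<Union>i<s. R #> h i) = (\<Sum>i<s. card (R #> h i))"
    using disj assms(2) sub
    by (intro card_UN_disjoint') (auto simp: disjoint_family_on_lessThan_iff intro: finite_subset)
  also have "\<dots> = card H * card R"
    using assms(3,6) hH subset bij_betw_same_card[OF assms(6)] by (simp add: card_r_coset subsetD)
  also have "\<dots> = card (carrier G - H)"
    using assms(7) card_Diff_subset[OF finite_subset[OF subset assms(2)] subset]
    by (simp add: order_def mult.commute)
  finally have "(\<Union>i<s. R #> h i) = carrier G - H"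
    using sub assms(2) by (intro card_subset_eq) auto
  then show ?thesis using disj unfolding partitions_fam_def by blast
qed

lemma RDS_translates_partition:
  assumes "finite (carrier G)" "RDS G H m n (m - 1) lam R"
  obtains A where "partitions_fam n A (carrier G - H)" "\<And>i. i < n \<Longrightarrow> card (A i) = m - 1"
    and "\<And>g. count (IntD G n A) g = n * count (Delta G R) g"
proof -
  have H: "H \<lhd> G" "card H = n" and order: "order G = m * n"
    and R: "R \<subseteq> carrier G" "card R = m - 1"
    using assms(2) unfolding RDS_def order_def by auto
  interpret normal H G by fact
  have "order G > 0" using assms(1) by (simp add: order_gt_0_iff_finite)
  then have mn: "m \<ge> 1" "n \<ge> 1" using order by auto
  then have "card R * card H < order G" using R(2) H(2) order by simp
  then obtain c where c: "c \<in> carrier G" "(R #> c) \<inter> H = {}"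
    using obtain_r_coset_disjoint_subgroup[OF subgroup_axioms assms(1) R(1)] by blast
  define R' where "R' = R #> c"
  have R': "RDS G H m n (m - 1) lam R'" "R' \<subseteq> carrier G" "card R' = m - 1"
    using RDS_r_coset[OF assms(2) c(1)] unfolding R'_def RDS_def by auto
  have "finite R'" using R'(2) assms(1) by (rule finite_subset)
  have "finite H" using subset assms(1) by (rule finite_subset)
  then obtain h where h: "bij_betw h {..<n} H"
    using ex_bij_betw_nat_finite H(2) by (metis atLeast0LessThan)
  show thesis
  proof
    show "partitions_fam n (\<lambda>i. R' #> h i) (carrier G - H)"
      using partitions_complement_r_cosets[OF H(1) assms(1) R'(2) c(2)[folded R'_def]
          RDS_eq_if_diff_in_subgroup[OF R'(1) \<open>finite R'\<close>] h] R'(3) H(2) order mn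
      by (simp add: diff_mult_distrib)
    have hG: "h i \<in> carrier G" if "i < n" for i using h that subset bij_betwE by blast
    show "card (R' #> h i) = m - 1" if "i < n" for i
      using card_r_coset[OF R'(2) hG[OF that]] R'(3) by simp
    show "count (IntD G n (\<lambda>i. R' #> h i)) g = n * count (Delta G R) g" for g
      using count_IntD_r_cosets[OF R'(2) hG] Delta_r_coset[OF R(1) c(1)] by (simp add: R'_def)
  qed
qed

end

theorem mainTheorem2:
  fixes G :: "('a, 'b) monoid_scheme" and H :: "'a set" and R :: "'a set"
    and m n lam :: nat
  assumes "group G" and "finite (carrier G)"
    and "card (carrier G) = m * n"
    and "H \<lhd> G" and "card H = n"
    and "real lam = (real m - 2) / real n"
    and "RDS G H m n (m - 1) lam R"
  shows "\<exists>A :: nat \<Rightarrow> 'a set.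
           partitions_fam n A (carrier G - H) \<and>
           DPDF G (m * n) n (m - 1) (m - 2) 0 A \<and>
           EPDF G (m * n) n (m - 1) ((m - 2) * (n - 1)) ((m - 1) * n) A"
proof -
  interpret group G by fact
  have subH: "subgroup H G" using assms(4) normal_imp_subgroup by blast
  have "finite H" using subgroup.subset[OF subH] assms(2) by (rule finite_subset)
  then have "n \<noteq> 0" using assms(5) subgroup.one_closed[OF subH] by (auto simp: card_gt_0_iff)
  then have "real (n * lam) + 2 = real m" using assms(6) by (simp add: field_simps)
  then have lam: "n * lam = m - 2" "m \<ge> 2" by linarith+
  obtain A where part: "partitions_fam n A (carrier G - H)"
    and card: "\<And>i. i < n \<Longrightarrow> card (A i) = m - 1"
    and Int: "\<And>g. count (IntD G n A) g = n * count (Delta G R) g"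
    using RDS_translates_partition[OF assms(2,7)] by blast
  have "count (IntD G n A) x = m - 2" if "x \<in> carrier G - H" for x
    using that Int assms(7) lam(1) unfolding RDS_def by simp
  moreover have "count (IntD G n A) x = 0" if "x \<in> H - {\<one>\<^bsub>G\<^esub>}" for x
    using that Int assms(7) unfolding RDS_def by simp
  ultimately have "DPDF G (m * n) n (m - 1) (m - 2) 0 A"
    and "EPDF G (m * n) n (m - 1) (m * n - 2 * n - (m - 2)) (m * n - n) A"
    using DPDF_EPDF_partition_complement[OF subH assms(2) part card] assms(3,5)
    by (simp_all add: order_def)
  moreover have "m * n - 2 * n - (m - 2) = (m - 2) * (n - 1)" "m * n - n = (m - 1) * n"
    using lam(2) \<open>n \<noteq> 0\<close> by (simp_all add: algebra_simps diff_mult_distrib diff_mult_distrib2)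
  ultimately show ?thesis using part by auto
qed

end
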